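(* Let $P$ be a 2-dimensional plane or a sphere in $\mathbb R^3$ with its usual induced surface measure $dS$. Let $0<a<2$, $0<b<2$ with $a+b>2$, and let $\xi\in\mathbb R^3$. Then there exists $C$ independent of $\xi$ and $P$ such that $$\int_P\frac{1}{|\xi-\eta|^a|\eta|^b}\,dS(\eta)\le\frac{C}{|\xi|^{a+b-2}}.$$ *)

theory Defs
  imports "HOL-Analysis.Analysis"
begin

text \<open>Surface measure on the affine plane through p spanned by the orthonormal
  vectors u, v: push-forward of 2-dimensional Lebesgue measure under the
  isometric parametrisation (s,t) maps to p + s u + t v.\<close>
definition plane_measure :: "real^3 \<Rightarrow> real^3 \<Rightarrow> real^3 \<Rightarrow> (real^3) measure" where
  "plane_measure p u v =
     distr (lborel :: (real \<times> real) measure) borel (\<lambda>(s, t). p + s *\<^sub>R u + t *\<^sub>R v)"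

definition sphere_measure :: "real^3 \<Rightarrow> real \<Rightarrow> (real^3) measure" where
  "sphere_measure c r =
     distr (density (lborel :: (real \<times> real) measure)
              (\<lambda>(\<theta>, \<phi>). ennreal (indicator ({0<..<pi} \<times> {0<..<2*pi}) (\<theta>, \<phi>) * r\<^sup>2 * sin \<theta>)))
       borel
       (\<lambda>(\<theta>, \<phi>). c + r *\<^sub>R vector [sin \<theta> * cos \<phi>, sin \<theta> * sin \<phi>, cos \<theta>])"

definition plane_or_sphere_measures :: "(real^3) measure set" where
  "plane_or_sphere_measures =
     {plane_measure p u v | p u v. u \<bullet> u = 1 \<and> v \<bullet> v = 1 \<and> u \<bullet> v = 0}
     \<union> {sphere_measure c r | c r. r > 0}"

end

theory Submission
  imports Defs
begin

text \<open>Planes and spheres in \<open>\<real>\<^sup>3\<close> carry surface measures with uniform quadratic ball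
  growth, \<open>S(B(x, r)) \<le> K r\<^sup>2\<close>; for a sphere this is seen in spherical coordinates, where a
  ball of radius \<open>\<rho>\<close> confines the polar angle to a set of length \<open>O(\<rho>/r)\<close> and, at polar
  angle \<open>\<theta>\<close>, the azimuth to a set of length \<open>O(\<rho>/(r sin \<theta>))\<close>.

  For any measure with \<open>\<mu>(B(x, r)) \<le> K r\<^sup>d\<close>, summing over the dyadic shells around \<open>x\<close>
  bounds the integral of \<open>dist x \<eta> powr -\<beta>\<close> over \<open>B(x, R)\<close> by \<open>C K R powr (d - \<beta>)\<close> when
  \<open>\<beta> < d\<close>, and the integral of \<open>dist x \<eta> powr -\<gamma>\<close> outside \<open>B(x, R)\<close> by
  \<open>C K R powr (d - \<gamma>)\<close> when \<open>\<gamma> > d\<close>. Put \<open>R = |\<xi>|/2\<close>. Whichever of \<open>0\<close> and \<open>\<xi>\<close> is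
  farther from \<open>\<eta>\<close> has distance at least \<open>max R t\<close> from it, \<open>t\<close> being the distance to the
  nearer one, so the integrand is at most \<open>R powr -a * t powr -b\<close> for \<open>t < R\<close> and
  \<open>t powr -(a + b)\<close> otherwise (or the same with \<open>a, b\<close> swapped). Both pieces are of the two
  kinds above, and each contributes \<open>O(R powr (d - a - b))\<close>.\<close>

section \<open>Integrals against measures with polynomial ball growth\<close>

lemma ex_dyadic_shell:
  fixes t :: real
  assumes "1 \<le> t"
  shows "\<exists>k::nat. 2 ^ k \<le> t \<and> t < 2 ^ Suc k"
proof -
  define k where "k = nat \<lfloor>log 2 t\<rfloor>"
  have "\<lfloor>log 2 t\<rfloor> = int k"
    using assms by (simp add: k_def)
  then have "2 powr real k \<le> t \<and> t < 2 powr (real k + 1)"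
    using floor_log_eq_powr_iff[of t 2 "int k"] assms by simp
  then show ?thesis
    by (metis of_nat_Suc powr_realpow zero_less_numeral add.commute)
qed

lemma suminf_ennreal_geometric:
  fixes c q :: real
  assumes "0 \<le> c" "0 \<le> q" "q < 1"
  shows "(\<Sum>k. ennreal (c * q ^ k)) = ennreal (c / (1 - q))"
proof -
  have "summable (\<lambda>k. c * q ^ k)"
    using assms by (intro summable_mult summable_geometric) auto
  then have "(\<Sum>k. ennreal (c * q ^ k)) = ennreal (\<Sum>k. c * q ^ k)"
    using assms by (intro suminf_ennreal2) auto
  also have "(\<Sum>k. c * q ^ k) = c / (1 - q)"
    using assms by (simp add: suminf_mult summable_geometric suminf_geometric)
  finally show ?thesis .
qed

locale ball_growth =
  fixes \<mu> :: "'a::metric_space measure" and d K :: real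
  assumes sets_eq: "sets \<mu> = sets borel"
    and dim_pos: "0 < d"
    and K_nonneg: "0 \<le> K"
    and emeasure_ball_le: "\<And>x r. 0 < r \<Longrightarrow> emeasure \<mu> (ball x r) \<le> ennreal (K * r powr d)"
begin

lemma ball_in_sets [measurable]: "ball x r \<in> sets \<mu>"
  by (simp add: sets_eq)

lemma borel_measurable_eq: "borel_measurable \<mu> = borel_measurable borel"
  by (rule measurable_cong_sets[OF sets_eq refl])

lemma borel_measurable_dist_point [measurable]: "(\<lambda>\<eta>. dist x \<eta>) \<in> borel_measurable \<mu>"
  unfolding borel_measurable_eq by (intro borel_measurable_continuous_onI continuous_intros)

lemma nn_integral_le_suminf_balls:
  assumes f_le: "\<And>\<eta>. \<exists>k. f \<eta> \<le> ennreal (c k) * indicator (ball x (r k)) \<eta>"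
    and r_pos: "\<And>k. 0 < r k"
  shows "(\<integral>\<^sup>+\<eta>. f \<eta> \<partial>\<mu>) \<le> (\<Sum>k. ennreal (c k * K * r k powr d))"
proof -
  have "(\<integral>\<^sup>+\<eta>. f \<eta> \<partial>\<mu>) \<le> (\<integral>\<^sup>+\<eta>. (\<Sum>k. ennreal (c k) * indicator (ball x (r k)) \<eta>) \<partial>\<mu>)"
  proof (rule nn_integral_mono)
    fix \<eta>
    obtain k where "f \<eta> \<le> ennreal (c k) * indicator (ball x (r k)) \<eta>"
      using f_le by blast
    also have "\<dots> \<le> (\<Sum>k. ennreal (c k) * indicator (ball x (r k)) \<eta>)"
      by (rule sum_le_suminf[of _ "{k}", simplified]) (auto simp: summableI)
    finally show "f \<eta> \<le> (\<Sum>k. ennreal (c k) * indicator (ball x (r k)) \<eta>)" .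
  qed
  also have "\<dots> = (\<Sum>k. ennreal (c k) * emeasure \<mu> (ball x (r k)))"
    by (subst nn_integral_suminf) (auto simp: nn_integral_cmult_indicator)
  also have "\<dots> \<le> (\<Sum>k. ennreal (c k) * ennreal (K * r k powr d))"
    by (intro suminf_le summableI mult_left_mono emeasure_ball_le r_pos) auto
  also have "\<dots> = (\<Sum>k. ennreal (c k * K * r k powr d))"
    using K_nonneg by (simp add: ennreal_mult''[symmetric] mult.assoc)
  finally show ?thesis .
qed

lemma set_nn_integral_ball_dist_powr_le:
  assumes "0 \<le> \<beta>" "\<beta> < d" "0 < R"
  shows "(\<integral>\<^sup>+\<eta>\<in>ball x R. ennreal (dist x \<eta> powr (-\<beta>)) \<partial>\<mu>)
    \<le> ennreal (K * 2 powr (\<beta> + d) / (1 - 2 powr (\<beta> - d)) * R powr (d - \<beta>))"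
proof -
  define c where "c k = (R / 2 ^ Suc k) powr (-\<beta>)" for k :: nat
  \<comment> \<open>radius \<open>2R/2\<^sup>k\<close> rather than \<open>R/2\<^sup>k\<close>: the shell only gives \<open>dist x \<eta> \<le> R/2\<^sup>k\<close>\<close>
  define r where "r k = 2 * R / 2 ^ k" for k :: nat
  define q where "q = 2 powr (\<beta> - d)"
  have q: "0 \<le> q" "q < 1"
    using assms by (auto simp: q_def intro: powr_less_one)
  have term_eq: "c k * K * r k powr d = K * 2 powr (\<beta> + d) * R powr (d - \<beta>) * q ^ k" for k
    using assms by (simp add: c_def r_def q_def powr_divide powr_mult powr_diff powr_add
        powr_minus powr_realpow[symmetric] powr_power powr_powr field_simps)
  have "(\<integral>\<^sup>+\<eta>\<in>ball x R. ennreal (dist x \<eta> powr (-\<beta>)) \<partial>\<mu>) \<le> (\<Sum>k. ennreal (c k * K * r k powr d))"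
  proof (rule nn_integral_le_suminf_balls)
    show "0 < r k" for k
      using assms by (simp add: r_def)
    fix \<eta>
    show "\<exists>k. ennreal (dist x \<eta> powr (-\<beta>)) * indicator (ball x R) \<eta>
      \<le> ennreal (c k) * indicator (ball x (r k)) \<eta>"
    proof (cases "\<eta> \<in> ball x R \<and> \<eta> \<noteq> x")
      case False
      \<comment> \<open>at \<open>\<eta> = x\<close> the integrand is \<open>0 powr -\<beta> = 0\<close>\<close>
      then show ?thesis by (auto simp: indicator_def)
    next
      case True
      then have \<rho>: "0 < dist x \<eta>" "dist x \<eta> < R"
        by auto
      then obtain k where k: "2 ^ k \<le> R / dist x \<eta>" "R / dist x \<eta> < 2 ^ Suc k"
        using ex_dyadic_shell[of "R / dist x \<eta>"] by auto
      have "R / 2 ^ Suc k < dist x \<eta>" "dist x \<eta> < r k"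
        using k \<rho> assms by (auto simp: r_def field_simps)
      then have "dist x \<eta> powr (-\<beta>) \<le> c k" "\<eta> \<in> ball x (r k)"
        using assms unfolding c_def by (auto intro: powr_mono2')
      then show ?thesis
        using True by (intro exI[of _ k]) (auto intro: ennreal_leI)
    qed
  qed
  also have "\<dots> = ennreal (K * 2 powr (\<beta> + d) * R powr (d - \<beta>) / (1 - q))"
    unfolding term_eq using q K_nonneg by (intro suminf_ennreal_geometric) auto
  finally show ?thesis
    by (simp add: q_def)
qed

lemma set_nn_integral_outside_ball_dist_powr_le:
  assumes "d < \<gamma>" "0 < R"
  shows "(\<integral>\<^sup>+\<eta>\<in>-ball x R. ennreal (dist x \<eta> powr (-\<gamma>)) \<partial>\<mu>)
    \<le> ennreal (K * 2 powr d / (1 - 2 powr (d - \<gamma>)) * R powr (d - \<gamma>))"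
proof -
  define c where "c k = (R * 2 ^ k) powr (-\<gamma>)" for k :: nat
  define r where "r k = R * 2 ^ Suc k" for k :: nat
  define q where "q = 2 powr (d - \<gamma>)"
  have q: "0 \<le> q" "q < 1"
    using assms by (auto simp: q_def intro: powr_less_one)
  have term_eq: "c k * K * r k powr d = K * 2 powr d * R powr (d - \<gamma>) * q ^ k" for k
    using assms by (simp add: c_def r_def q_def powr_mult powr_diff powr_add
        powr_minus powr_realpow[symmetric] powr_power powr_powr field_simps)
  have "(\<integral>\<^sup>+\<eta>\<in>-ball x R. ennreal (dist x \<eta> powr (-\<gamma>)) \<partial>\<mu>) \<le> (\<Sum>k. ennreal (c k * K * r k powr d))"
  proof (rule nn_integral_le_suminf_balls)
    show "0 < r k" for k
      using assms by (simp add: r_def)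
    fix \<eta>
    show "\<exists>k. ennreal (dist x \<eta> powr (-\<gamma>)) * indicator (-ball x R) \<eta>
      \<le> ennreal (c k) * indicator (ball x (r k)) \<eta>"
    proof (cases "\<eta> \<in> ball x R")
      case True
      then show ?thesis by (auto simp: indicator_def)
    next
      case False
      then have \<rho>: "R \<le> dist x \<eta>"
        by auto
      then obtain k where k: "2 ^ k \<le> dist x \<eta> / R" "dist x \<eta> / R < 2 ^ Suc k"
        using ex_dyadic_shell[of "dist x \<eta> / R"] assms by auto
      have "R * 2 ^ k \<le> dist x \<eta>" "dist x \<eta> < r k"
        using k assms by (auto simp: r_def field_simps)
      then have "dist x \<eta> powr (-\<gamma>) \<le> c k" "\<eta> \<in> ball x (r k)"
        using assms dim_pos unfolding c_def by (auto intro: powr_mono2')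
      then show ?thesis
        using False by (intro exI[of _ k]) (auto intro: ennreal_leI)
    qed
  qed
  also have "\<dots> = ennreal (K * 2 powr d * R powr (d - \<gamma>) / (1 - q))"
    unfolding term_eq using q K_nonneg by (intro suminf_ennreal_geometric) auto
  finally show ?thesis
    by (simp add: q_def)
qed

end

text \<open>A bound for \<open>1 / (s powr \<alpha> * t powr \<beta>)\<close> whenever \<open>s \<ge> max R t\<close>.\<close>
definition two_scale_weight :: "real \<Rightarrow> real \<Rightarrow> real \<Rightarrow> real \<Rightarrow> real" where
  "two_scale_weight \<alpha> \<beta> R t = (if t < R then R powr (-\<alpha>) * t powr (-\<beta>) else t powr (-(\<alpha> + \<beta>)))"

lemma two_scale_weight_nonneg: "0 \<le> two_scale_weight \<alpha> \<beta> R t"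
  by (simp add: two_scale_weight_def)

lemma borel_measurable_two_scale_weight [measurable]:
  "two_scale_weight \<alpha> \<beta> R \<in> borel_measurable borel"
  unfolding two_scale_weight_def by measurable

lemma inverse_powr_mult_le_two_scale_weight:
  fixes a b s t R :: real
  assumes "0 \<le> a" "0 \<le> t" "t \<le> s" "R \<le> s"
  shows "1 / (s powr a * t powr b) \<le> two_scale_weight a b R t"
proof (cases "t = 0")
  case True
  then show ?thesis by (simp add: two_scale_weight_nonneg)
next
  case False
  then have t: "0 < t" using assms by simp
  have "1 / (s powr a * t powr b) \<le> 1 / (max R t powr a * t powr b)"
    using assms t by (intro divide_left_mono mult_right_mono powr_mono2 mult_pos_pos) auto
  also have "\<dots> = two_scale_weight a b R t"
    using t powr_minus_divide[of t "a + b"]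
    by (auto simp: two_scale_weight_def max_def powr_minus_divide powr_add[symmetric])
  finally show ?thesis .
qed

lemma (in ball_growth) nn_integral_two_scale_weight_le:
  assumes "0 \<le> \<beta>" "\<beta> < d" "d < \<alpha> + \<beta>" "0 < R"
  shows "(\<integral>\<^sup>+\<eta>. ennreal (two_scale_weight \<alpha> \<beta> R (dist x \<eta>)) \<partial>\<mu>)
    \<le> ennreal (K * (2 powr (\<beta> + d) / (1 - 2 powr (\<beta> - d)) + 2 powr d / (1 - 2 powr (d - (\<alpha> + \<beta>))))
        * R powr (d - \<alpha> - \<beta>))"
proof -
  define C_near where "C_near = K * 2 powr (\<beta> + d) / (1 - 2 powr (\<beta> - d))"
  define C_far where "C_far = K * 2 powr d / (1 - 2 powr (d - (\<alpha> + \<beta>)))"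
  have "C_near \<ge> 0" "C_far \<ge> 0"
    using assms K_nonneg powr_less_one[of 2 "\<beta> - d"] powr_less_one[of 2 "d - (\<alpha> + \<beta>)"]
    by (auto simp: C_near_def C_far_def)
  have "(\<integral>\<^sup>+\<eta>. ennreal (two_scale_weight \<alpha> \<beta> R (dist x \<eta>)) \<partial>\<mu>)
      = (\<integral>\<^sup>+\<eta>. ennreal (R powr (-\<alpha>)) * (ennreal (dist x \<eta> powr (-\<beta>)) * indicator (ball x R) \<eta>)
           + ennreal (dist x \<eta> powr (-(\<alpha> + \<beta>))) * indicator (-ball x R) \<eta> \<partial>\<mu>)"
    by (intro nn_integral_cong) (auto simp: two_scale_weight_def ennreal_mult)
  also have "\<dots> = ennreal (R powr (-\<alpha>)) * (\<integral>\<^sup>+\<eta>\<in>ball x R. ennreal (dist x \<eta> powr (-\<beta>)) \<partial>\<mu>)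
      + (\<integral>\<^sup>+\<eta>\<in>-ball x R. ennreal (dist x \<eta> powr (-(\<alpha> + \<beta>))) \<partial>\<mu>)"
    by (simp add: nn_integral_add nn_integral_cmult)
  also have "\<dots> \<le> ennreal (R powr (-\<alpha>)) * ennreal (C_near * R powr (d - \<beta>))
      + ennreal (C_far * R powr (d - (\<alpha> + \<beta>)))"
    unfolding C_near_def C_far_def using assms
    by (intro add_mono mult_left_mono set_nn_integral_ball_dist_powr_le
        set_nn_integral_outside_ball_dist_powr_le) auto
  also have "\<dots> = ennreal ((C_near + C_far) * R powr (d - \<alpha> - \<beta>))"
    using \<open>C_near \<ge> 0\<close> \<open>C_far \<ge> 0\<close>
    by (simp add: ennreal_mult[symmetric] ennreal_plus[symmetric] powr_add[symmetric] algebra_simps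
        del: ennreal_plus)
  finally show ?thesis
    by (simp add: C_near_def C_far_def algebra_simps add_divide_distrib)
qed

lemma inverse_powr_product_le_two_scale_weights:
  fixes \<xi> \<eta> :: "'a::real_normed_vector"
  assumes "0 < a" "0 < b"
  shows "1 / (norm (\<xi> - \<eta>) powr a * norm \<eta> powr b)
    \<le> two_scale_weight a b (norm \<xi> / 2) (dist 0 \<eta>) + two_scale_weight b a (norm \<xi> / 2) (dist \<xi> \<eta>)"
proof -
  have "norm \<xi> \<le> norm (\<xi> - \<eta>) + norm \<eta>"
    using norm_triangle_ineq[of "\<xi> - \<eta>" \<eta>] by simp
  then consider "norm \<eta> \<le> norm (\<xi> - \<eta>)" "norm \<xi> / 2 \<le> norm (\<xi> - \<eta>)"
    | "norm (\<xi> - \<eta>) \<le> norm \<eta>" "norm \<xi> / 2 \<le> norm \<eta>"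
    by linarith
  then show ?thesis
  proof cases
    case 1
    then have "1 / (norm (\<xi> - \<eta>) powr a * norm \<eta> powr b)
        \<le> two_scale_weight a b (norm \<xi> / 2) (norm \<eta>)"
      using assms by (intro inverse_powr_mult_le_two_scale_weight) auto
    then show ?thesis
      by (simp add: add_increasing2 two_scale_weight_nonneg)
  next
    case 2
    then have "1 / (norm \<eta> powr b * norm (\<xi> - \<eta>) powr a)
        \<le> two_scale_weight b a (norm \<xi> / 2) (norm (\<xi> - \<eta>))"
      using assms by (intro inverse_powr_mult_le_two_scale_weight) auto
    then show ?thesis
      by (simp add: add_increasing mult.commute two_scale_weight_nonneg dist_norm)
  qed
qed

lemma nn_integral_riesz_product_le:
  fixes a b d K :: real
  assumes ab: "0 < a" "a < d" "0 < b" "b < d" "d < a + b"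
  shows "\<exists>C. \<forall>(\<mu> :: 'a::real_normed_vector measure) \<xi>. ball_growth \<mu> d K \<longrightarrow> \<xi> \<noteq> 0 \<longrightarrow>
    (\<integral>\<^sup>+\<eta>. ennreal (1 / (norm (\<xi> - \<eta>) powr a * norm \<eta> powr b)) \<partial>\<mu>)
      \<le> ennreal (C / norm \<xi> powr (a + b - d))"
proof -
  define C where "C \<alpha> \<beta> =
    K * (2 powr (\<beta> + d) / (1 - 2 powr (\<beta> - d)) + 2 powr d / (1 - 2 powr (d - (\<alpha> + \<beta>))))"
    for \<alpha> \<beta>
  have C_nonneg: "C \<alpha> \<beta> \<ge> 0" if "0 \<le> K" "\<beta> < d" "d < \<alpha> + \<beta>" for \<alpha> \<beta>
    using that powr_less_one[of 2 "\<beta> - d"] powr_less_one[of 2 "d - (\<alpha> + \<beta>)"] by (simp add: C_def)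
  show ?thesis
  proof (intro exI allI impI)
    fix \<mu> :: "'a measure" and \<xi> :: 'a
    assume growth: "ball_growth \<mu> d K" and "\<xi> \<noteq> 0"
    interpret ball_growth \<mu> d K by (rule growth)
    define R where "R = norm \<xi> / 2"
    have R: "0 < R"
      using \<open>\<xi> \<noteq> 0\<close> by (simp add: R_def)
    have "(\<integral>\<^sup>+\<eta>. ennreal (1 / (norm (\<xi> - \<eta>) powr a * norm \<eta> powr b)) \<partial>\<mu>)
        \<le> (\<integral>\<^sup>+\<eta>. ennreal (two_scale_weight a b R (dist 0 \<eta>))
              + ennreal (two_scale_weight b a R (dist \<xi> \<eta>)) \<partial>\<mu>)"
      using inverse_powr_product_le_two_scale_weights[of a b \<xi>] ab unfolding R_def
      by (intro nn_integral_mono)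
        (simp add: two_scale_weight_nonneg ennreal_plus[symmetric] ennreal_leI del: ennreal_plus)
    also have "\<dots> = (\<integral>\<^sup>+\<eta>. ennreal (two_scale_weight a b R (dist 0 \<eta>)) \<partial>\<mu>)
        + (\<integral>\<^sup>+\<eta>. ennreal (two_scale_weight b a R (dist \<xi> \<eta>)) \<partial>\<mu>)"
      by (intro nn_integral_add) measurable
    also have "\<dots> \<le> ennreal (C a b * R powr (d - a - b)) + ennreal (C b a * R powr (d - b - a))"
      using ab R unfolding C_def by (intro add_mono nn_integral_two_scale_weight_le) auto
    also have "\<dots> = ennreal ((C a b + C b a) * 2 powr (a + b - d) / norm \<xi> powr (a + b - d))"
    proof -
      have "R powr (d - a - b) = 2 powr (a + b - d) / norm \<xi> powr (a + b - d)"
        unfolding R_def by (simp add: powr_divide powr_diff powr_add ac_simps)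
      moreover have "C a b \<ge> 0" "C b a \<ge> 0"
        using C_nonneg K_nonneg ab by (auto simp: add.commute)
      ultimately show ?thesis
        by (simp add: ennreal_plus[symmetric] algebra_simps add_divide_distrib del: ennreal_plus)
    qed
    finally show "(\<integral>\<^sup>+\<eta>. ennreal (1 / (norm (\<xi> - \<eta>) powr a * norm \<eta> powr b)) \<partial>\<mu>)
      \<le> ennreal ((C a b + C b a) * 2 powr (a + b - d) / norm \<xi> powr (a + b - d))" .
  qed
qed

section \<open>Ball growth of planes and spheres\<close>

lemma plane_measure_ball_le:
  fixes p u v x :: "real^3"
  assumes "u \<bullet> u = 1" "v \<bullet> v = 1" "u \<bullet> v = 0" "0 < r"
  shows "emeasure (plane_measure p u v) (ball x r) \<le> ennreal (4 * r\<^sup>2)"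
proof -
  define f where "f = (\<lambda>(s::real, t::real). p + s *\<^sub>R u + t *\<^sub>R v)"
  have f_meas: "f \<in> borel_measurable (lborel :: (real \<times> real) measure)"
    unfolding f_def case_prod_beta measurable_lborel2
    by (intro borel_measurable_continuous_onI continuous_intros)
  define s\<^sub>0 where "s\<^sub>0 = (x - p) \<bullet> u"
  define t\<^sub>0 where "t\<^sub>0 = (x - p) \<bullet> v"
  have "norm u = 1" "norm v = 1"
    using assms by (simp_all add: norm_eq_sqrt_inner)
  have "f -` ball x r \<subseteq> {s\<^sub>0 - r .. s\<^sub>0 + r} \<times> {t\<^sub>0 - r .. t\<^sub>0 + r}"
  proof (rule subsetI)
    fix z assume "z \<in> f -` ball x r"
    moreover obtain s t where z: "z = (s, t)"
      by fastforce
    ultimately have d: "norm (f (s, t) - x) < r"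
      by (simp add: dist_norm norm_minus_commute)
    have "(f (s, t) - x) \<bullet> u = s - s\<^sub>0" "(f (s, t) - x) \<bullet> v = t - t\<^sub>0"
      using assms unfolding f_def s\<^sub>0_def t\<^sub>0_def
      by (simp_all add: inner_diff_left inner_add_left inner_commute algebra_simps)
    then have "\<bar>s - s\<^sub>0\<bar> \<le> norm (f (s, t) - x)" "\<bar>t - t\<^sub>0\<bar> \<le> norm (f (s, t) - x)"
      using Cauchy_Schwarz_ineq2[of "f (s, t) - x" u] Cauchy_Schwarz_ineq2[of "f (s, t) - x" v]
        \<open>norm u = 1\<close> \<open>norm v = 1\<close> by auto
    with d show "z \<in> {s\<^sub>0 - r .. s\<^sub>0 + r} \<times> {t\<^sub>0 - r .. t\<^sub>0 + r}"
      by (auto simp: z)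
  qed
  then have "emeasure (plane_measure p u v) (ball x r)
      \<le> emeasure lborel ({s\<^sub>0 - r .. s\<^sub>0 + r} \<times> {t\<^sub>0 - r .. t\<^sub>0 + r})"
    unfolding plane_measure_def f_def[symmetric]
    by (subst emeasure_distr[OF f_meas]) (auto intro!: emeasure_mono borel_closed closed_Times)
  also have "\<dots> = ennreal (4 * r\<^sup>2)"
    using \<open>0 < r\<close> by (simp add: lborel_prod[symmetric] lborel.emeasure_pair_measure_Times
        ennreal_mult'[symmetric] power2_eq_square)
  finally show ?thesis .
qed

lemma half_abs_le_abs_sin:
  fixes y :: real
  assumes "\<bar>y\<bar> \<le> pi / 2"
  shows "\<bar>y\<bar> / 2 \<le> \<bar>sin y\<bar>"
proof -
  have "y / 2 \<le> sin y" if "0 \<le> y" "y \<le> pi / 2" for y :: real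
  proof (cases "y \<le> pi / 3")
    case True
    obtain z where z: "0 \<le> z" "z \<le> y" "sin y - sin 0 = (y - 0) * cos z"
      using MVT2[of 0 y sin cos] DERIV_sin \<open>0 \<le> y\<close>
      by (cases "y = 0") (auto intro: less_imp_le)
    have "1 / 2 = cos (pi / 3)"
      by (simp add: cos_60)
    also have "\<dots> \<le> cos z"
      using z True by (intro cos_monotone_0_pi_le) auto
    finally show ?thesis
      using z \<open>0 \<le> y\<close> mult_left_mono[of "1/2" "cos z" y] by simp
  next
    case False
    have "sqrt 3 / 2 = sin (pi / 3)"
      by (simp add: sin_60)
    also have "\<dots> \<le> sin y"
      using False that by (intro sin_monotone_2pi_le) auto
    finally have "sqrt 3 / 2 \<le> sin y" .
    moreover have "17 / 10 \<le> sqrt 3"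
      by (rule real_le_rsqrt) (simp add: power2_eq_square)
    moreover have "pi < 16 / 5"
      using pi_approx by simp
    ultimately show ?thesis
      using that by linarith
  qed
  from this[of "\<bar>y\<bar>"] assms show ?thesis
    by (cases "0 \<le> y") auto
qed

lemma emeasure_abs_sin_less_le:
  fixes \<epsilon> \<psi> \<alpha> :: real
  assumes "0 < \<epsilon>"
  shows "emeasure lborel {t \<in> {\<alpha>..\<alpha> + 2 * pi}. \<bar>sin (t - \<psi>)\<bar> < \<epsilon>} \<le> ennreal (12 * \<epsilon>)"
proof -
  \<comment> \<open>\<open>|sin y| < \<epsilon>\<close> forces \<open>y\<close> within \<open>2\<epsilon>\<close> of a multiple of \<open>\<pi>\<close>, and a window of
    length \<open>2\<pi>\<close> meets the \<open>2\<epsilon>\<close>-neighbourhoods of at most three of them\<close>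
  define m where "m = \<lfloor>(\<alpha> - \<psi>) / pi + 1 / 2\<rfloor>"
  define I where "I j = cball (\<psi> + of_int (m + j) * pi) (2 * \<epsilon>)" for j :: int
  have "{t \<in> {\<alpha>..\<alpha> + 2 * pi}. \<bar>sin (t - \<psi>)\<bar> < \<epsilon>} \<subseteq> I 0 \<union> I 1 \<union> I 2"
  proof
    fix t assume t: "t \<in> {t \<in> {\<alpha>..\<alpha> + 2 * pi}. \<bar>sin (t - \<psi>)\<bar> < \<epsilon>}"
    define k where "k = \<lfloor>(t - \<psi>) / pi + 1 / 2\<rfloor>"
    define y where "y = t - \<psi> - of_int k * pi"
    have "of_int k \<le> (t - \<psi>) / pi + 1 / 2" "(t - \<psi>) / pi + 1 / 2 < of_int k + 1"
      unfolding k_def by linarith+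
    then have "of_int k * pi \<le> t - \<psi> + pi / 2" "t - \<psi> + pi / 2 < of_int k * pi + pi"
      by (simp_all add: field_simps)
    then have "\<bar>y\<bar> \<le> pi / 2"
      unfolding y_def by linarith
    moreover have "sin (t - \<psi>) = sin (y + of_int k * pi)"
      by (simp add: y_def)
    then have "\<bar>sin (t - \<psi>)\<bar> = \<bar>sin y\<bar>"
      by (simp add: sin_add abs_mult mult.commute[of _ pi])
    ultimately have "\<bar>y\<bar> < 2 * \<epsilon>"
      using half_abs_le_abs_sin[of y] t by auto
    moreover have "m \<le> k"
      using t unfolding m_def k_def by (auto intro!: floor_mono divide_right_mono)
    moreover have "(t - \<psi>) / pi \<le> (\<alpha> - \<psi> + 2 * pi) / pi"
      using t by (intro divide_right_mono) auto
    then have "k \<le> \<lfloor>((\<alpha> - \<psi>) / pi + 1 / 2) + 2\<rfloor>"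
      unfolding k_def by (intro floor_mono) (simp add: add_divide_distrib)
    then have "k \<le> m + 2"
      unfolding m_def by (metis floor_add_int of_int_numeral)
    ultimately have "k - m \<in> {0, 1, 2}" "t \<in> I (k - m)"
      unfolding I_def y_def by (auto simp: dist_real_def)
    then show "t \<in> I 0 \<union> I 1 \<union> I 2"
      by auto
  qed
  then have "emeasure lborel {t \<in> {\<alpha>..\<alpha> + 2 * pi}. \<bar>sin (t - \<psi>)\<bar> < \<epsilon>}
      \<le> emeasure lborel (I 0 \<union> I 1 \<union> I 2)"
    by (rule emeasure_mono) (simp add: I_def)
  also have "\<dots> \<le> emeasure lborel (I 0) + emeasure lborel (I 1) + emeasure lborel (I 2)"
    by (intro order_trans[OF emeasure_subadditive] add_mono emeasure_subadditive) (auto simp: I_def)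
  also have "\<dots> = ennreal (12 * \<epsilon>)"
    using assms by (simp add: I_def cball_eq_atLeastAtMost ennreal_plus[symmetric] del: ennreal_plus)
  finally show ?thesis .
qed

lemma law_of_cosines_polar:
  fixes s m \<phi> \<psi> :: real
  shows "(s * cos \<phi> - m * cos \<psi>)\<^sup>2 + (s * sin \<phi> - m * sin \<psi>)\<^sup>2 = s\<^sup>2 + m\<^sup>2 - 2 * s * m * cos (\<phi> - \<psi>)"
proof -
  have "(s * cos \<phi> - m * cos \<psi>)\<^sup>2 + (s * sin \<phi> - m * sin \<psi>)\<^sup>2
      = s\<^sup>2 * ((sin \<phi>)\<^sup>2 + (cos \<phi>)\<^sup>2) + m\<^sup>2 * ((sin \<psi>)\<^sup>2 + (cos \<psi>)\<^sup>2) - 2 * s * m * cos (\<phi> - \<psi>)"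
    unfolding cos_diff power2_eq_square by algebra
  then show ?thesis
    by simp
qed

lemma polar_dist_sq_ge:
  fixes s m \<phi> \<psi> :: real
  shows "(s * sin (\<phi> - \<psi>))\<^sup>2 \<le> (s * cos \<phi> - m * cos \<psi>)\<^sup>2 + (s * sin \<phi> - m * sin \<psi>)\<^sup>2"
    and "0 \<le> s \<Longrightarrow> 0 \<le> m \<Longrightarrow> (s - m)\<^sup>2 \<le> (s * cos \<phi> - m * cos \<psi>)\<^sup>2 + (s * sin \<phi> - m * sin \<psi>)\<^sup>2"
proof -
  have "s\<^sup>2 + m\<^sup>2 - 2 * s * m * cos (\<phi> - \<psi>) = (s * sin (\<phi> - \<psi>))\<^sup>2 + (s * cos (\<phi> - \<psi>) - m)\<^sup>2"
    using sin_cos_squared_add[of "\<phi> - \<psi>"] unfolding power2_eq_square by algebra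
  then show "(s * sin (\<phi> - \<psi>))\<^sup>2 \<le> (s * cos \<phi> - m * cos \<psi>)\<^sup>2 + (s * sin \<phi> - m * sin \<psi>)\<^sup>2"
    unfolding law_of_cosines_polar by simp
  assume "0 \<le> s" "0 \<le> m"
  then have "s * m * cos (\<phi> - \<psi>) \<le> s * m"
    by (simp add: mult_left_le)
  then show "(s - m)\<^sup>2 \<le> (s * cos \<phi> - m * cos \<psi>)\<^sup>2 + (s * sin \<phi> - m * sin \<psi>)\<^sup>2"
    unfolding law_of_cosines_polar by (simp add: power2_diff)
qed

lemma ex_polar_nonneg: "\<exists>m t. (0::real) \<le> m \<and> a = m * cos t \<and> b = m * sin t"
proof -
  let ?z = "Complex a b"
  have "a = cmod ?z * cos (Arg ?z)" "b = cmod ?z * sin (Arg ?z)"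
    using rcis_cmod_Arg[of ?z] by (metis Re_rcis complex.sel(1), metis Im_rcis complex.sel(2))
  then show ?thesis
    by (intro exI[of _ "cmod ?z"] exI[of _ "Arg ?z"]) auto
qed

lemma sets_abs_sin_less: "{t \<in> {\<alpha>..\<alpha> + 2 * pi}. \<bar>sin (t - \<psi>)\<bar> < (\<epsilon>::real)} \<in> sets lborel"
proof -
  have "open {t. \<bar>sin (t - \<psi>)\<bar> < \<epsilon>}"
    by (intro open_Collect_less continuous_intros)
  then have "{\<alpha>..\<alpha> + 2 * pi} \<inter> {t. \<bar>sin (t - \<psi>)\<bar> < \<epsilon>} \<in> sets lborel"
    by (auto intro!: sets.Int borel_closed borel_open)
  moreover have "{t \<in> {\<alpha>..\<alpha> + 2 * pi}. \<bar>sin (t - \<psi>)\<bar> < \<epsilon>} = {\<alpha>..\<alpha> + 2 * pi} \<inter> {t. \<bar>sin (t - \<psi>)\<bar> < \<epsilon>}"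
    by auto
  ultimately show ?thesis
    by simp
qed

definition unit_sphere_point :: "real \<Rightarrow> real \<Rightarrow> real^3" where
  "unit_sphere_point \<theta> \<phi> = vector [sin \<theta> * cos \<phi>, sin \<theta> * sin \<phi>, cos \<theta>]"

lemma continuous_on_unit_sphere_point:
  "continuous_on UNIV (\<lambda>z. unit_sphere_point (fst z) (snd z))"
proof -
  have "unit_sphere_point \<theta> \<phi> = (sin \<theta> * cos \<phi>) *\<^sub>R axis 1 1 + (sin \<theta> * sin \<phi>) *\<^sub>R axis 2 1
      + cos \<theta> *\<^sub>R axis 3 1" for \<theta> \<phi>
    by (simp add: unit_sphere_point_def vec_eq_iff axis_def) (metis exhaust_3 num1_eq1 one_neq_zero)
  then show ?thesis
    by (simp only:) (intro continuous_intros)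
qed

lemma dist_sphere_point_sq:
  fixes c x :: "real^3"
  shows "(dist (c + r *\<^sub>R unit_sphere_point \<theta> \<phi>) x)\<^sup>2
    = (r * sin \<theta> * cos \<phi> - (x - c)$1)\<^sup>2 + (r * sin \<theta> * sin \<phi> - (x - c)$2)\<^sup>2
      + (r * cos \<theta> - (x - c)$3)\<^sup>2"
  unfolding dist_norm power2_norm_eq_inner unit_sphere_point_def
  by (simp add: inner_vec_def sum_3 power2_eq_square algebra_simps)

text \<open>The angles \<open>\<phi>\<^sub>0, \<theta>\<^sub>0\<close> are spherical coordinates of \<open>x - c\<close>. The azimuthal bound
  compares the horizontal components of the two points, the polar one their horizontal
  radii and heights.\<close>
lemma sphere_ball_angles:
  fixes c x :: "real^3" and r :: real
  assumes "0 \<le> r"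
  obtains \<phi>\<^sub>0 \<theta>\<^sub>0 where
    "\<And>\<theta> \<phi> \<rho>. 0 \<le> sin \<theta> \<Longrightarrow> dist (c + r *\<^sub>R unit_sphere_point \<theta> \<phi>) x < \<rho> \<Longrightarrow>
      \<bar>r * sin \<theta> * sin (\<phi> - \<phi>\<^sub>0)\<bar> < \<rho> \<and> \<bar>r * sin (\<theta> - \<theta>\<^sub>0)\<bar> < \<rho>"
proof -
  obtain m \<phi>\<^sub>0 where m: "0 \<le> m" "(x - c)$1 = m * cos \<phi>\<^sub>0" "(x - c)$2 = m * sin \<phi>\<^sub>0"
    using ex_polar_nonneg by blast
  obtain n \<theta>\<^sub>0 where n: "(x - c)$3 = n * cos \<theta>\<^sub>0" "m = n * sin \<theta>\<^sub>0"
    using ex_polar_nonneg by blast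
  show ?thesis
  proof (rule that[of \<phi>\<^sub>0 \<theta>\<^sub>0])
    fix \<theta> \<phi> \<rho> :: real
    assume "0 \<le> sin \<theta>" and near: "dist (c + r *\<^sub>R unit_sphere_point \<theta> \<phi>) x < \<rho>"
    define s where "s = r * sin \<theta>"
    define H where "H = (s * cos \<phi> - m * cos \<phi>\<^sub>0)\<^sup>2 + (s * sin \<phi> - m * sin \<phi>\<^sub>0)\<^sup>2"
    define V where "V = (r * cos \<theta> - n * cos \<theta>\<^sub>0)\<^sup>2"
    have "(dist (c + r *\<^sub>R unit_sphere_point \<theta> \<phi>) x)\<^sup>2 = H + V"
      unfolding dist_sphere_point_sq H_def V_def s_def m(2,3) n(1) by simp
    then have "H + V < \<rho>\<^sup>2"
      using near by (metis power_strict_mono zero_le_dist zero_less_numeral)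
    moreover have "(s * sin (\<phi> - \<phi>\<^sub>0))\<^sup>2 \<le> H"
      unfolding H_def by (rule polar_dist_sq_ge(1))
    moreover have "(r * sin (\<theta> - \<theta>\<^sub>0))\<^sup>2 \<le> V + (s - m)\<^sup>2"
      using polar_dist_sq_ge(1)[of r \<theta> \<theta>\<^sub>0 n] by (simp add: V_def s_def n)
    moreover have "(s - m)\<^sup>2 \<le> H"
      unfolding H_def using assms \<open>0 \<le> sin \<theta>\<close> m by (intro polar_dist_sq_ge(2)) (auto simp: s_def)
    moreover have "0 \<le> V" "0 \<le> \<rho>"
      using near by (auto simp: V_def intro: order_trans[OF zero_le_dist less_imp_le])
    ultimately have "\<bar>s * sin (\<phi> - \<phi>\<^sub>0)\<bar>\<^sup>2 < \<rho>\<^sup>2" "\<bar>r * sin (\<theta> - \<theta>\<^sub>0)\<bar>\<^sup>2 < \<rho>\<^sup>2"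
      by simp_all
    with \<open>0 \<le> \<rho>\<close> have "\<bar>s * sin (\<phi> - \<phi>\<^sub>0)\<bar> < \<rho>" "\<bar>r * sin (\<theta> - \<theta>\<^sub>0)\<bar> < \<rho>"
      using power2_less_imp_less by blast+
    then show "\<bar>r * sin \<theta> * sin (\<phi> - \<phi>\<^sub>0)\<bar> < \<rho> \<and> \<bar>r * sin (\<theta> - \<theta>\<^sub>0)\<bar> < \<rho>"
      by (simp add: s_def)
  qed
qed

lemma emeasure_sphere_measure_iterated:
  fixes c :: "real^3"
  assumes "A \<in> sets borel"
  shows "emeasure (sphere_measure c r) A =
    (\<integral>\<^sup>+\<theta>. \<integral>\<^sup>+\<phi>. ennreal (indicator ({0<..<pi} \<times> {0<..<2*pi}) (\<theta>, \<phi>) * r\<^sup>2 * sin \<theta>)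
        * indicator A (c + r *\<^sub>R unit_sphere_point \<theta> \<phi>) \<partial>lborel \<partial>lborel)"
proof -
  define B where "B = ({0<..<pi} \<times> {0<..<2*pi} :: (real \<times> real) set)"
  define g where "g z = ennreal (indicator B z * r\<^sup>2 * sin (fst z))" for z
  define F where "F z = c + r *\<^sub>R unit_sphere_point (fst z) (snd z)" for z
  have "continuous_on UNIV F"
    unfolding F_def by (intro continuous_intros continuous_on_unit_sphere_point)
  then have F_meas: "F \<in> borel_measurable borel"
    by (rule borel_measurable_continuous_onI)
  then have F_vimage: "F -` A \<in> sets borel"
    using measurable_sets_borel[OF F_meas assms] by simp
  have "B \<in> sets borel"
    unfolding B_def by (intro borel_open open_Times) auto
  then have "(\<lambda>z. indicator B z * r\<^sup>2 * sin (fst z)) \<in> borel_measurable borel"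
    by (intro borel_measurable_times borel_measurable_indicator borel_measurable_const
        borel_measurable_continuous_onI continuous_intros)
  then have g_meas: "g \<in> borel_measurable borel"
    unfolding g_def by measurable
  have "sphere_measure c r = distr (density lborel g) borel F"
    unfolding sphere_measure_def B_def[symmetric] g_def F_def unit_sphere_point_def
    by (simp add: case_prod_beta')
  then have "emeasure (sphere_measure c r) A = emeasure (density lborel g) (F -` A)"
    using F_meas assms by (simp add: emeasure_distr)
  also have "\<dots> = (\<integral>\<^sup>+z. g z * indicator (F -` A) z \<partial>(lborel \<Otimes>\<^sub>M lborel))"
    using F_vimage g_meas by (subst emeasure_density) (auto simp: lborel_prod)
  also have "\<dots> = (\<integral>\<^sup>+\<theta>. \<integral>\<^sup>+\<phi>. g (\<theta>, \<phi>) * indicator (F -` A) (\<theta>, \<phi>) \<partial>lborel \<partial>lborel)"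
    using F_vimage g_meas by (subst lborel.nn_integral_fst[symmetric]) (auto simp: lborel_prod)
  finally show ?thesis
    by (simp only: g_def B_def F_def indicator_vimage fst_conv snd_conv)
qed

lemma nn_integral_sphere_fibre_le:
  fixes c x :: "real^3"
  assumes "0 < r" "0 < \<rho>"
    and near: "\<And>\<phi>. 0 < sin \<theta> \<Longrightarrow> dist (c + r *\<^sub>R unit_sphere_point \<theta> \<phi>) x < \<rho> \<Longrightarrow>
      \<bar>r * sin \<theta> * sin (\<phi> - \<phi>\<^sub>0)\<bar> < \<rho> \<and> \<bar>r * sin (\<theta> - \<theta>\<^sub>0)\<bar> < \<rho>"
  shows "(\<integral>\<^sup>+\<phi>. ennreal (indicator ({0<..<pi} \<times> {0<..<2*pi}) (\<theta>, \<phi>) * r\<^sup>2 * sin \<theta>)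
        * indicator (ball x \<rho>) (c + r *\<^sub>R unit_sphere_point \<theta> \<phi>) \<partial>lborel)
    \<le> ennreal (12 * \<rho> * r) * indicator {t \<in> {0..2 * pi}. \<bar>sin (t - \<theta>\<^sub>0)\<bar> < \<rho> / r} \<theta>"
proof (cases "0 < \<theta> \<and> \<theta> < pi")
  case False
  then show ?thesis by (simp add: indicator_times)
next
  case True
  then have "0 < sin \<theta>"
    by (intro sin_gt_zero) auto
  define T where "T = {t \<in> {0..2 * pi}. \<bar>sin (t - \<theta>\<^sub>0)\<bar> < \<rho> / r}"
  define \<Phi> where "\<Phi> = {t \<in> {0..2 * pi}. \<bar>sin (t - \<phi>\<^sub>0)\<bar> < \<rho> / (r * sin \<theta>)}"
  have "ennreal (indicator ({0<..<pi} \<times> {0<..<2*pi}) (\<theta>, \<phi>) * r\<^sup>2 * sin \<theta>)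
      * indicator (ball x \<rho>) (c + r *\<^sub>R unit_sphere_point \<theta> \<phi>)
    \<le> ennreal (r\<^sup>2 * sin \<theta>) * indicator T \<theta> * indicator \<Phi> \<phi>" for \<phi>
  proof (cases "0 < \<phi> \<and> \<phi> < 2 * pi \<and> dist (c + r *\<^sub>R unit_sphere_point \<theta> \<phi>) x < \<rho>")
    case False
    then show ?thesis by (auto simp: dist_commute)
  next
    case inside: True
    with near \<open>0 < sin \<theta>\<close> have "\<bar>r * sin \<theta> * sin (\<phi> - \<phi>\<^sub>0)\<bar> < \<rho>" "\<bar>r * sin (\<theta> - \<theta>\<^sub>0)\<bar> < \<rho>"
      by auto
    with assms \<open>0 < sin \<theta>\<close> True inside have "\<theta> \<in> T" "\<phi> \<in> \<Phi>"
      by (auto simp: T_def \<Phi>_def abs_mult pos_less_divide_eq mult.commute)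
    with True inside show ?thesis
      by (simp add: dist_commute)
  qed
  then have "(\<integral>\<^sup>+\<phi>. ennreal (indicator ({0<..<pi} \<times> {0<..<2*pi}) (\<theta>, \<phi>) * r\<^sup>2 * sin \<theta>)
        * indicator (ball x \<rho>) (c + r *\<^sub>R unit_sphere_point \<theta> \<phi>) \<partial>lborel)
      \<le> (\<integral>\<^sup>+\<phi>. ennreal (r\<^sup>2 * sin \<theta>) * indicator T \<theta> * indicator \<Phi> \<phi> \<partial>lborel)"
    by (intro nn_integral_mono)
  also have "\<dots> = ennreal (r\<^sup>2 * sin \<theta>) * indicator T \<theta> * emeasure lborel \<Phi>"
    using sets_abs_sin_less[of 0 _ \<phi>\<^sub>0] by (subst nn_integral_cmult_indicator) (auto simp: \<Phi>_def)
  also have "\<dots> \<le> ennreal (r\<^sup>2 * sin \<theta>) * indicator T \<theta> * ennreal (12 * (\<rho> / (r * sin \<theta>)))"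
    using emeasure_abs_sin_less_le[of "\<rho> / (r * sin \<theta>)" 0 \<phi>\<^sub>0] assms \<open>0 < sin \<theta>\<close>
    by (intro mult_left_mono) (auto simp: \<Phi>_def)
  also have "\<dots> = ennreal (12 * \<rho> * r) * indicator T \<theta>"
    using assms \<open>0 < sin \<theta>\<close>
    by (simp add: ennreal_mult''[symmetric] power2_eq_square field_simps
        mult.commute[of _ "indicator T \<theta>"])
  finally show ?thesis
    by (simp add: T_def)
qed

lemma sphere_measure_ball_le:
  fixes c x :: "real^3"
  assumes "0 < r" "0 < \<rho>"
  shows "emeasure (sphere_measure c r) (ball x \<rho>) \<le> ennreal (144 * \<rho>\<^sup>2)"
proof -
  obtain \<phi>\<^sub>0 \<theta>\<^sub>0 where near:
    "\<And>\<theta> \<phi>. 0 \<le> sin \<theta> \<Longrightarrow> dist (c + r *\<^sub>R unit_sphere_point \<theta> \<phi>) x < \<rho> \<Longrightarrow>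
      \<bar>r * sin \<theta> * sin (\<phi> - \<phi>\<^sub>0)\<bar> < \<rho> \<and> \<bar>r * sin (\<theta> - \<theta>\<^sub>0)\<bar> < \<rho>"
    using sphere_ball_angles[of r c x] assms by (metis less_imp_le)
  define T where "T = {t \<in> {0..2 * pi}. \<bar>sin (t - \<theta>\<^sub>0)\<bar> < \<rho> / r}"
  have "emeasure (sphere_measure c r) (ball x \<rho>)
      \<le> (\<integral>\<^sup>+\<theta>. ennreal (12 * \<rho> * r) * indicator T \<theta> \<partial>lborel)"
    unfolding emeasure_sphere_measure_iterated[OF borel_open[OF open_ball]] T_def
    using assms near
    by (intro nn_integral_mono nn_integral_sphere_fibre_le[where \<phi>\<^sub>0 = \<phi>\<^sub>0]) auto
  also have "\<dots> = ennreal (12 * \<rho> * r) * emeasure lborel T"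
    using sets_abs_sin_less[of 0 _ \<theta>\<^sub>0] by (subst nn_integral_cmult_indicator) (auto simp: T_def)
  also have "\<dots> \<le> ennreal (12 * \<rho> * r) * ennreal (12 * (\<rho> / r))"
    using emeasure_abs_sin_less_le[of "\<rho> / r" 0 \<theta>\<^sub>0] assms
    by (intro mult_left_mono) (auto simp: T_def)
  also have "\<dots> = ennreal (144 * \<rho>\<^sup>2)"
    using assms by (simp add: ennreal_mult''[symmetric] power2_eq_square field_simps)
  finally show ?thesis .
qed

lemma ball_growth_plane_or_sphere_measure:
  assumes "S \<in> plane_or_sphere_measures"
  shows "ball_growth S 2 144"
proof -
  have "sets S = sets borel \<and> (\<forall>x r. 0 < r \<longrightarrow> emeasure S (ball x r) \<le> ennreal (144 * r\<^sup>2))"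
    using assms unfolding plane_or_sphere_measures_def
  proof (elim UnE CollectE exE conjE)
    fix p u v :: "real^3"
    assume S: "S = plane_measure p u v" and "u \<bullet> u = 1" "v \<bullet> v = 1" "u \<bullet> v = 0"
    then have "emeasure S (ball x r) \<le> ennreal (144 * r\<^sup>2)" if "0 < r" for x r
      using plane_measure_ball_le[of u v r p x] that
      by (auto intro: order_trans ennreal_leI)
    then show ?thesis
      by (simp add: S plane_measure_def)
  next
    fix c :: "real^3" and r :: real
    assume S: "S = sphere_measure c r" and "0 < r"
    then have "emeasure S (ball x \<rho>) \<le> ennreal (144 * \<rho>\<^sup>2)" if "0 < \<rho>" for x \<rho>
      using sphere_measure_ball_le that by blast
    then show ?thesis
      by (simp add: S sphere_measure_def)
  qed
  then show ?thesis
    by unfold_locales (auto simp: powr_numeral)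
qed

theorem lemma2p2:
  fixes a b :: real
  assumes "0 < a" "a < 2" "0 < b" "b < 2" "a + b > 2"
  shows "\<exists>C::real. \<forall>S \<in> plane_or_sphere_measures. \<forall>\<xi>::real^3. \<xi> \<noteq> 0 \<longrightarrow>
           (\<integral>\<^sup>+ \<eta>. ennreal (1 / (norm (\<xi> - \<eta>) powr a * norm \<eta> powr b)) \<partial>S)
             \<le> ennreal (C / norm \<xi> powr (a + b - 2))"
proof -
  obtain C where "\<forall>(\<mu> :: (real^3) measure) \<xi>. ball_growth \<mu> 2 144 \<longrightarrow> \<xi> \<noteq> 0 \<longrightarrow>
      (\<integral>\<^sup>+\<eta>. ennreal (1 / (norm (\<xi> - \<eta>) powr a * norm \<eta> powr b)) \<partial>\<mu>)
        \<le> ennreal (C / norm \<xi> powr (a + b - 2))"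
    using nn_integral_riesz_product_le[of a 2 b 144] assms by blast
  then show ?thesis
    using ball_growth_plane_or_sphere_measure by blast
qed

end
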